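(* Assume the standing assumptions (A) below. Let $g\in L^{\infty}(\Gamma_-)$ satisfy $\underline g:=\inf_{\Gamma_-} g>0$, let $\Sigma_a\in\mathcal{F}_{\underline\Sigma_a}^{\overline\Sigma_a}(\Omega)$ for some constants $\underline\Sigma_a,\overline\Sigma_a$, and let $u$ be the unique solution of the linear transport equation \[ \mathbf v\cdot\nabla u+(\Sigma_a+\sigma_s)u=\sigma_s K u \ \text{ in } X,\qquad u=g \ \text{ on } \Gamma_- . \] Then there exists a constant $\mathfrak c>0$ such that $u\ge \mathfrak c>0$.
   Context: Let $d\ge 2$, $\Omega\subset\mathbb R^d$ a domain with boundary $\partial\Omega$ and unit outer normal $\boldsymbol\nu(\mathbf x)$, $\mathbb S^{d-1}$ the unit sphere equipped with the normalized surface measure $d\mathbf v$, $X:=\Omega\times\mathbb S^{d-1}$, and $\Gamma_-:=\{(\mathbf x,\mathbf v)\in\partial\Omega\times\mathbb S^{d-1}: -\boldsymbol\nu(\mathbf x)\cdot\mathbf v>0\}$. The scattering operator is $Ku(\mathbf x,\mathbf v):=\int_{\mathbb S^{d-1}}\Theta(\mathbf v,\mathbf v')u(\mathbf x,\mathbf v')\,d\mathbf v'$ with $\Theta$ symmetric and $\int_{\mathbb S^{d-1}}\Theta(\mathbf v,\mathbf v')d\mathbf v'=\int_{\mathbb S^{d-1}}\Theta(\mathbf v,\mathbf v')d\mathbf v=1$. $L^p(\Gamma_-)$ is the space with norm $(\int_{\partial\Omega}\int_{\{\mathbf v:-\boldsymbol\nu(\mathbf x)\cdot \mathbf v>0\}}|\boldsymbol\nu(\mathbf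 x)\cdot\mathbf v||f|^p d\mathbf v\,d\gamma)^{1/p}$. For a set $Y$ and constants $0<\underline f\le \overline f<\infty$, $\mathcal F_{\underline f}^{\overline f}(Y):=\{f\in L^\infty(Y): \underline f\le f\le\overline f \text{ a.e.}\}$. Standing assumption (A): (i) $\Omega$ is bounded, convex and smooth; (ii) $\sigma_s\in\mathcal F_{\underline\sigma_s}^{\overline\sigma_s}(\Omega)$ for some constants $\underline\sigma_s,\overline\sigma_s$; (iii) $\Theta\in\mathcal F_{\underline\theta}^{\overline\theta}(\mathbb S^{d-1}\times\mathbb S^{d-1})$ for some constants $\underline\theta,\overline\theta$. *)

theory Defs
  imports "HOL-Analysis.Analysis" "HOL-Probability.Probability"
begin

fun pderivs :: "'a::euclidean_space list \<Rightarrow> ('a \<Rightarrow> real) \<Rightarrow> 'a \<Rightarrow> real" where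
  "pderivs [] f = f"
| "pderivs (b # bs) f = (\<lambda>x. deriv (\<lambda>t. pderivs bs f (x + t *\<^sub>R b)) 0)"

definition smooth_fun :: "('a::euclidean_space \<Rightarrow> real) \<Rightarrow> bool" where
  "smooth_fun f \<longleftrightarrow> (\<forall>bs. set bs \<subseteq> Basis \<longrightarrow>
      continuous_on UNIV (pderivs bs f) \<and>
      (\<forall>b\<in>Basis. \<forall>x. (\<lambda>t. pderivs bs f (x + t *\<^sub>R b)) differentiable (at 0)))"

definition grad :: "('a::euclidean_space \<Rightarrow> real) \<Rightarrow> 'a \<Rightarrow> 'a" where
  "grad f x = (\<Sum>b\<in>Basis. frechet_derivative f (at x) b *\<^sub>R b)"

definition defining_function :: "'a::euclidean_space set \<Rightarrow> ('a \<Rightarrow> real) \<Rightarrow> bool" where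
  "defining_function \<Omega> \<rho> \<longleftrightarrow> smooth_fun \<rho> \<and> \<Omega> = {x. \<rho> x < 0} \<and>
      (\<forall>x. \<rho> x = 0 \<longrightarrow> grad \<rho> x \<noteq> 0)"

definition smooth_domain :: "'a::euclidean_space set \<Rightarrow> bool" where
  "smooth_domain \<Omega> \<longleftrightarrow> (\<exists>\<rho>. defining_function \<Omega> \<rho>)"

text \<open>Unit outer normal (independent of the choice of defining function).\<close>
definition outer_normal :: "'a::euclidean_space set \<Rightarrow> 'a \<Rightarrow> 'a" where
  "outer_normal \<Omega> y = (let \<rho> = (SOME \<rho>. defining_function \<Omega> \<rho>) in grad \<rho> y /\<^sub>R norm (grad \<rho> y))"

text \<open>Normalized surface measure on the unit sphere, realised as the cone measure
  (push-forward of the uniform probability on the unit ball under x / |x|).\<close>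
definition sphere_measure :: "'a::euclidean_space measure" where
  "sphere_measure = distr (uniform_measure lborel (ball 0 1)) borel (\<lambda>x. x /\<^sub>R norm x)"

definition Gamma_minus :: "'a::euclidean_space set \<Rightarrow> ('a \<times> 'a) set" where
  "Gamma_minus \<Omega> = {(y, v). y \<in> frontier \<Omega> \<and> v \<in> sphere 0 1 \<and> - (outer_normal \<Omega> y \<bullet> v) > 0}"

definition in_F :: "'b measure \<Rightarrow> 'b set \<Rightarrow> real \<Rightarrow> real \<Rightarrow> ('b \<Rightarrow> real) \<Rightarrow> bool" where
  "in_F M Y lo hi f \<longleftrightarrow> 0 < lo \<and> lo \<le> hi \<and> f \<in> borel_measurable M \<and>
      (AE y in M. y \<in> Y \<longrightarrow> lo \<le> f y \<and> f y \<le> hi)"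

definition scat_op :: "('a::euclidean_space \<Rightarrow> 'a \<Rightarrow> real) \<Rightarrow> ('a \<Rightarrow> 'a \<Rightarrow> real) \<Rightarrow> 'a \<Rightarrow> 'a \<Rightarrow> real" where
  "scat_op \<Theta> u x v = (\<integral>v'. \<Theta> v v' * u x v' \<partial>sphere_measure)"

definition tau_minus :: "'a::euclidean_space set \<Rightarrow> 'a \<Rightarrow> 'a \<Rightarrow> real" where
  "tau_minus \<Omega> x v = Sup {t. 0 \<le> t \<and> x - t *\<^sub>R v \<in> \<Omega>}"

text \<open>Solution of  v.grad u + (Sa + ss) u = ss K u  in X,  u = g on Gamma_-,
  in the (equivalent) integral form along characteristics.\<close>
definition is_transport_solution ::
  "'a::euclidean_space set \<Rightarrow> ('a \<Rightarrow> real) \<Rightarrow> ('a \<Rightarrow> real) \<Rightarrow> ('a \<Rightarrow> 'a \<Rightarrow> real)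
    \<Rightarrow> ('a \<Rightarrow> 'a \<Rightarrow> real) \<Rightarrow> ('a \<Rightarrow> 'a \<Rightarrow> real) \<Rightarrow> bool" where
  "is_transport_solution \<Omega> \<Sigma>a \<sigma>s \<Theta> g u \<longleftrightarrow>
     (\<lambda>(x, v). u x v) \<in> borel_measurable (lborel \<Otimes>\<^sub>M sphere_measure) \<and>
     (\<exists>B. AE (x, v) in lborel \<Otimes>\<^sub>M sphere_measure. x \<in> \<Omega> \<longrightarrow> \<bar>u x v\<bar> \<le> B) \<and>
     (AE (x, v) in lborel \<Otimes>\<^sub>M sphere_measure. x \<in> \<Omega> \<longrightarrow>
        (let \<tau> = tau_minus \<Omega> x v;
             att = (\<lambda>t. exp (- (LINT s:{0..t}|lborel. \<Sigma>a (x - s *\<^sub>R v) + \<sigma>s (x - s *\<^sub>R v))))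
         in u x v = att \<tau> * g (x - \<tau> *\<^sub>R v) v
               + (LINT t:{0..\<tau>}|lborel. att t * \<sigma>s (x - t *\<^sub>R v) * scat_op \<Theta> u (x - t *\<^sub>R v) v)))"

end

theory Submission
  imports Defs
begin

text \<open>Along each backward characteristic the solution is the attenuated boundary value plus an
  attenuated average of its angular means. Since \<open>\<Omega>\<close> is bounded and convex, every backward ray
  leaves \<open>\<Omega>\<close> through \<open>\<Gamma>\<^sub>-\<close> after a length at most \<open>diam \<Omega>\<close>, so the boundary term is at least
  \<open>c\<^sub>0 = exp (- C diam \<Omega>) inf g > 0\<close>, where \<open>C\<close> bounds \<open>\<Sigma>\<^sub>a + \<sigma>\<^sub>s\<close>. If \<open>u \<ge> -M\<close>, then
  \<open>K u \<ge> -M\<close> because \<open>\<Theta>\<close> is a nonnegative kernel of mass one, and the scattering term is at least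
  \<open>-M\<close> times the scattered fraction \<open>\<sigma>\<^sub>s / (\<Sigma>\<^sub>a + \<sigma>\<^sub>s) \<le> q < 1\<close> of the total attenuation, up to a
  factor \<open>exp (C h)\<close> for an arbitrarily small step \<open>h\<close>. Hence \<open>u \<ge> -M\<close> implies \<open>u \<ge> c\<^sub>0 - q' M\<close>
  with \<open>q' < 1\<close>, and iterating from the a priori bound \<open>u \<ge> -sup |u|\<close> gives \<open>u \<ge> c\<^sub>0 / 2\<close>.\<close>

section \<open>The normalized measure on the unit sphere\<close>

lemma sets_sphere_measure [measurable_cong, simp]: "sets sphere_measure = sets borel"
  by (simp add: sphere_measure_def)

lemma space_sphere_measure [simp]: "space sphere_measure = UNIV"
  by (simp add: sphere_measure_def)

lemma emeasure_lborel_unit_ball_nonzero: "emeasure lborel (ball (0::'a::euclidean_space) 1) \<noteq> 0"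
  using unit_ball_vol_pos[of "real DIM('a)"] by (simp add: emeasure_ball del: unit_ball_vol_pos)

lemma prob_space_uniform_unit_ball: "prob_space (uniform_measure lborel (ball (0::'a::euclidean_space) 1))"
  by (intro prob_space_uniform_measure emeasure_lborel_unit_ball_nonzero)
    (simp_all add: emeasure_ball)

lemma prob_space_sphere_measure: "prob_space sphere_measure"
  unfolding sphere_measure_def
  by (rule prob_space.prob_space_distr[OF prob_space_uniform_unit_ball]) simp

interpretation sphere_measure: prob_space "sphere_measure :: 'a::euclidean_space measure"
  by (rule prob_space_sphere_measure)

lemma AE_sphere_measure_norm: "AE v in sphere_measure. norm v = 1"
proof -
  have "AE x in uniform_measure lborel (ball (0::'a) 1). norm (x /\<^sub>R norm x) = 1"
    using AE_lborel_singleton[of "0::'a"] emeasure_lborel_ball_finite[of "0::'a" 1]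
    by (subst AE_uniform_measure) (auto simp: emeasure_lborel_unit_ball_nonzero elim!: eventually_mono)
  then show ?thesis
    unfolding sphere_measure_def by (subst AE_distr_iff) auto
qed

lemma (in sigma_finite_measure) AE_pair_measure_snd:
  assumes "AE y in M. P y"
  shows "AE p in N \<Otimes>\<^sub>M M. P (snd p)"
proof -
  obtain Z where Z: "Z \<in> null_sets M" "{y \<in> space M. \<not> P y} \<subseteq> Z"
    using assms by (auto elim!: AE_E simp: null_sets_def)
  show ?thesis
  proof (rule AE_I')
    show "space N \<times> Z \<in> null_sets (N \<Otimes>\<^sub>M M)"
      using Z(1) by (intro times_in_null_sets2) auto
  qed (use Z(2) in \<open>auto simp: space_pair_measure\<close>)
qed

lemma AE_rays_avoid_null_set:
  fixes M :: "'a::euclidean_space measure"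
  assumes "sigma_finite_measure M" and sets_M [measurable_cong]: "sets M = sets borel"
    and "Z \<in> null_sets lborel"
  shows "AE (x, v) in lborel \<Otimes>\<^sub>M M. AE t in lborel. x - t *\<^sub>R v \<notin> Z"
proof -
  interpret M: sigma_finite_measure M by fact
  interpret P: pair_sigma_finite lborel M ..
  interpret PS: sigma_finite_measure "lborel \<Otimes>\<^sub>M M"
    by (rule P.sigma_finite_measure_axioms)
  interpret Q: pair_sigma_finite "lborel \<Otimes>\<^sub>M M" lborel ..
  have [measurable]: "Z \<in> sets borel"
    using assms(3) by (simp add: null_sets_def)
  define H where "H p t = (indicator Z (fst p - t *\<^sub>R snd p) :: ennreal)" for p :: "'a \<times> 'a" and t :: real
  have H_measurable [measurable]: "case_prod H \<in> borel_measurable ((lborel \<Otimes>\<^sub>M M) \<Otimes>\<^sub>M lborel)"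
    unfolding H_def by measurable
  have translate: "(\<integral>\<^sup>+ x. indicator Z (x - c) \<partial>lborel) = 0" for c :: 'a
  proof -
    have "(\<integral>\<^sup>+ x. indicator Z (x - c) \<partial>lborel) = (\<integral>\<^sup>+ y. indicator Z y \<partial>distr lborel borel ((+) (- c)))"
      by (subst nn_integral_distr) (auto simp: algebra_simps)
    then show ?thesis
      using assms(3) by (simp add: lborel_distr_plus null_sets_def)
  qed
  have "(\<integral>\<^sup>+ p. H p t \<partial>(lborel \<Otimes>\<^sub>M M)) = 0" for t
    by (subst P.nn_integral_snd[symmetric]) (auto simp: H_def translate)
  moreover have "(\<integral>\<^sup>+ p. (\<integral>\<^sup>+ t. H p t \<partial>lborel) \<partial>(lborel \<Otimes>\<^sub>M M))
      = (\<integral>\<^sup>+ t. (\<integral>\<^sup>+ p. H p t \<partial>(lborel \<Otimes>\<^sub>M M)) \<partial>lborel)"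
    using lborel.nn_integral_fst[OF H_measurable] Q.nn_integral_snd[OF H_measurable] by simp
  ultimately have "(\<integral>\<^sup>+ p. (\<integral>\<^sup>+ t. H p t \<partial>lborel) \<partial>(lborel \<Otimes>\<^sub>M M)) = 0"
    by simp
  then have "AE p in lborel \<Otimes>\<^sub>M M. (\<integral>\<^sup>+ t. H p t \<partial>lborel) = 0"
    by (subst (asm) nn_integral_0_iff_AE) measurable
  then show ?thesis
    by (auto simp: H_def nn_integral_0_iff_AE elim!: eventually_mono)
qed

lemma AE_along_rays:
  fixes M :: "'a::euclidean_space measure"
  assumes "sigma_finite_measure M" "sets M = sets borel" "AE y in lborel. P y"
  shows "AE (x, v) in lborel \<Otimes>\<^sub>M M. AE t in lborel. P (x - t *\<^sub>R v)"
proof -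
  obtain Z where "Z \<in> null_sets lborel" "{y. \<not> P y} \<subseteq> Z"
    using assms(3) by (auto elim!: AE_E simp: null_sets_def)
  with AE_rays_avoid_null_set[OF assms(1,2)] show ?thesis
    by (fastforce elim!: eventually_mono)
qed

section \<open>Attenuation integrals along a ray\<close>

lemma set_integrable_bounded_Icc:
  fixes f :: "real \<Rightarrow> real"
  assumes [measurable]: "f \<in> borel_measurable borel" "A \<in> sets borel"
    and "A \<subseteq> {a..b}" and "AE x in lborel. x \<in> A \<longrightarrow> \<bar>f x\<bar> \<le> B"
  shows "set_integrable lborel A f"
  unfolding set_integrable_def
proof (rule integrableI_bounded_set[where A = A and B = B])
  have "emeasure lborel A \<le> emeasure lborel {a..b}"
    using assms(3) by (rule emeasure_mono) simp
  also have "\<dots> < \<infinity>"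
    by (simp add: emeasure_lborel_Icc_eq)
  finally show "emeasure lborel A < \<infinity>" .
  show "AE x in lborel. x \<in> A \<longrightarrow> norm (indicator A x *\<^sub>R f x) \<le> B"
    using assms(4) by (auto elim!: eventually_mono)
qed simp_all

lemma borel_measurable_set_integral_Icc:
  fixes f :: "real \<Rightarrow> real"
  assumes [measurable]: "f \<in> borel_measurable borel"
  shows "(\<lambda>t. LINT r:{a..t}|lborel. f r) \<in> borel_measurable borel"
proof -
  have "(\<lambda>t. LINT r:{a..t}|lborel. f r) = (\<lambda>t. \<integral>r. (if a \<le> r \<and> r \<le> t then f r else 0) \<partial>lborel)"
    by (auto simp: set_lebesgue_integral_def indicator_def intro!: Bochner_Integration.integral_cong)
  also have "\<dots> \<in> borel_measurable borel"
    by (rule lborel.borel_measurable_lebesgue_integral) measurable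
  finally show ?thesis .
qed

lemma set_integral_singleton [simp]:
  fixes f :: "real \<Rightarrow> real"
  shows "(LINT r:{c}|lborel. f r) = 0"
  unfolding set_lebesgue_integral_def
  by (rule integral_eq_zero_AE) (rule AE_mp[OF AE_lborel_singleton[of c]], auto simp: indicator_def)

lemma le_exp_mult_one_minus_exp_neg:
  fixes d K :: real
  assumes "0 \<le> d" "d \<le> K"
  shows "d \<le> exp K * (1 - exp (- d))"
proof -
  have "d \<le> exp d - 1"
    using exp_ge_add_one_self[of d] by linarith
  also have "\<dots> = exp d * (1 - exp (- d))"
    by (simp add: algebra_simps exp_minus_inverse)
  also have "\<dots> \<le> exp K * (1 - exp (- d))"
    using assms by (intro mult_right_mono) auto
  finally show ?thesis .
qed

locale bounded_rate =
  fixes f :: "real \<Rightarrow> real" and C \<tau> :: real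
  assumes measurable_rate [measurable]: "f \<in> borel_measurable borel"
    and rate_bounds: "AE t in lborel. t \<in> {0..\<tau>} \<longrightarrow> 0 \<le> f t \<and> f t \<le> C"
    and rate_bound_nonneg: "0 \<le> C"
begin

definition depth :: "real \<Rightarrow> real" where
  "depth t = (LINT r:{0..t}|lborel. f r)"

lemma depth_0 [simp]: "depth 0 = 0"
  by (simp add: depth_def)

lemma set_integrable_rate:
  assumes "A \<in> sets borel" "A \<subseteq> {0..\<tau>}"
  shows "set_integrable lborel A f"
  by (rule set_integrable_bounded_Icc[OF measurable_rate assms, where B = C])
    (use assms(2) in \<open>auto intro: eventually_mono[OF rate_bounds]\<close>)

lemma depth_split:
  assumes "0 \<le> a" "a \<le> b" "b \<le> \<tau>"
  shows "depth b = depth a + (LINT r:{a<..b}|lborel. f r)"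
proof -
  have "{0..b} = {0..a} \<union> {a<..b}"
    using assms by auto
  then have "depth b = (LINT r:({0..a} \<union> {a<..b})|lborel. f r)"
    by (simp add: depth_def)
  also have "\<dots> = depth a + (LINT r:{a<..b}|lborel. f r)"
    unfolding depth_def by (rule set_integral_Un) (use assms in \<open>auto intro: set_integrable_rate\<close>)
  finally show ?thesis .
qed

lemma depth_increment_bounds:
  assumes "0 \<le> a" "a \<le> b" "b \<le> \<tau>"
  shows "0 \<le> depth b - depth a" and "depth b - depth a \<le> C * (b - a)"
proof -
  have const: "set_integrable lborel {a<..b} (\<lambda>_. c)" for c :: real
    by (rule set_integrable_bounded_Icc[where a = a and b = b and B = "\<bar>c\<bar>"]) auto
  have AE_bounds: "AE r in lborel. r \<in> {a<..b} \<longrightarrow> 0 \<le> f r \<and> f r \<le> C"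
    using rate_bounds assms by (auto elim!: eventually_mono)
  have "(LINT r:{a<..b}|lborel. (0::real)) \<le> (LINT r:{a<..b}|lborel. f r)"
    using assms AE_bounds by (intro set_integral_mono_AE const set_integrable_rate) (auto elim!: eventually_mono)
  then show "0 \<le> depth b - depth a"
    using depth_split[OF assms] by simp
  have "(LINT r:{a<..b}|lborel. f r) \<le> (LINT r:{a<..b}|lborel. C)"
    using assms AE_bounds by (intro set_integral_mono_AE const set_integrable_rate) (auto elim!: eventually_mono)
  then show "depth b - depth a \<le> C * (b - a)"
    using depth_split[OF assms] assms by (simp add: set_integral_const emeasure_bounded_finite mult.commute)
qed

lemma depth_nonneg: "0 \<le> t \<Longrightarrow> t \<le> \<tau> \<Longrightarrow> 0 \<le> depth t"
  using depth_increment_bounds(1)[of 0 t] by simp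

lemma exp_neg_depth_ge: "0 \<le> t \<Longrightarrow> t \<le> \<tau> \<Longrightarrow> exp (- (C * t)) \<le> exp (- depth t)"
  using depth_increment_bounds(2)[of 0 t] by simp

lemma measurable_depth [measurable]: "depth \<in> borel_measurable borel"
  unfolding depth_def[abs_def] by (rule borel_measurable_set_integral_Icc) simp

lemma set_integrable_attenuated:
  assumes [measurable]: "g \<in> borel_measurable borel"
    and "A \<in> sets borel" "A \<subseteq> {0..\<tau>}" and bound: "AE t in lborel. t \<in> A \<longrightarrow> \<bar>g t\<bar> \<le> B"
  shows "set_integrable lborel A (\<lambda>t. exp (- depth t) * g t)"
proof (rule set_integrable_bounded_Icc[OF _ assms(2,3), where B = B])
  show "AE t in lborel. t \<in> A \<longrightarrow> \<bar>exp (- depth t) * g t\<bar> \<le> B"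
    using bound
  proof (rule eventually_mono, intro impI)
    fix t assume "t \<in> A \<longrightarrow> \<bar>g t\<bar> \<le> B" "t \<in> A"
    moreover from this have "exp (- depth t) \<le> 1"
      using assms(3) depth_nonneg[of t] by auto
    ultimately show "\<bar>exp (- depth t) * g t\<bar> \<le> B"
      using mult_mono[of "exp (- depth t)" 1 "\<bar>g t\<bar>" B] by (simp add: abs_mult)
  qed
qed measurable

lemma set_integrable_attenuated_rate:
  assumes "A \<in> sets borel" "A \<subseteq> {0..\<tau>}"
  shows "set_integrable lborel A (\<lambda>t. exp (- depth t) * f t)"
  using assms by (intro set_integrable_attenuated[where B = C])
    (auto intro: eventually_mono[OF rate_bounds])

text \<open>On a step of length at most \<open>h\<close> the depth grows by at most \<open>C h\<close>; this replaces the
  fundamental theorem of calculus, which is not available for the merely measurable rate \<open>f\<close>.\<close>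

lemma attenuated_rate_integral_Ioc_le:
  assumes ab: "0 \<le> a" "a \<le> b" "b \<le> \<tau>" and "b - a \<le> h"
  shows "(LINT t:{a<..b}|lborel. exp (- depth t) * f t) \<le> exp (C * h) * (exp (- depth a) - exp (- depth b))"
proof -
  have "(LINT t:{a<..b}|lborel. exp (- depth t) * f t) \<le> (LINT t:{a<..b}|lborel. exp (- depth a) * f t)"
  proof (rule set_integral_mono_AE)
    show "set_integrable lborel {a<..b} (\<lambda>t. exp (- depth t) * f t)"
      using ab by (intro set_integrable_attenuated_rate) auto
    show "set_integrable lborel {a<..b} (\<lambda>t. exp (- depth a) * f t)"
      using ab by (intro set_integrable_mult_right set_integrable_rate) auto
    show "AE t\<in>{a<..b} in lborel. exp (- depth t) * f t \<le> exp (- depth a) * f t"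
      using rate_bounds
    proof (rule eventually_mono, intro impI)
      fix t assume "t \<in> {0..\<tau>} \<longrightarrow> 0 \<le> f t \<and> f t \<le> C" and t: "t \<in> {a<..b}"
      moreover have "depth a \<le> depth t"
        using depth_increment_bounds(1)[of a t] ab t by simp
      ultimately show "exp (- depth t) * f t \<le> exp (- depth a) * f t"
        using ab by (simp add: mult_right_mono)
    qed
  qed
  also have "\<dots> = exp (- depth a) * (depth b - depth a)"
    using depth_split[OF ab] by simp
  also have "\<dots> \<le> exp (- depth a) * (exp (C * h) * (1 - exp (- (depth b - depth a))))"
  proof (intro mult_left_mono le_exp_mult_one_minus_exp_neg)
    show "depth b - depth a \<le> C * h"
      using depth_increment_bounds(2)[OF ab] \<open>b - a \<le> h\<close> rate_bound_nonneg
      by (meson mult_left_mono order_trans)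
  qed (use depth_increment_bounds(1)[OF ab] in auto)
  also have "\<dots> = exp (C * h) * (exp (- depth a) - exp (- depth b))"
    by (simp add: algebra_simps flip: exp_add)
  finally show ?thesis .
qed

lemma attenuated_rate_integral_le:
  assumes "0 < h" "0 \<le> s" "s \<le> \<tau>"
  shows "(LINT t:{0..s}|lborel. exp (- depth t) * f t) \<le> exp (C * h) * (1 - exp (- depth s))"
proof -
  have "(LINT t:{0..s}|lborel. exp (- depth t) * f t) \<le> exp (C * h) * (1 - exp (- depth s))"
    if "0 \<le> s" "s \<le> \<tau>" "s \<le> real n * h" for n s
    using that
  proof (induction n arbitrary: s)
    case 0
    then show ?case by simp
  next
    case (Suc n)
    define a where "a = min s (real n * h)"
    have a: "0 \<le> a" "a \<le> s" "s - a \<le> h"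
      using Suc.prems \<open>0 < h\<close> by (auto simp: a_def algebra_simps)
    have "{0..s} = {0..a} \<union> {a<..s}"
      using a by auto
    then have "(LINT t:{0..s}|lborel. exp (- depth t) * f t)
        = (LINT t:({0..a} \<union> {a<..s})|lborel. exp (- depth t) * f t)"
      by simp
    also have "\<dots> = (LINT t:{0..a}|lborel. exp (- depth t) * f t) + (LINT t:{a<..s}|lborel. exp (- depth t) * f t)"
      using a Suc.prems by (intro set_integral_Un) (auto intro: set_integrable_attenuated_rate)
    also have "\<dots> \<le> exp (C * h) * (1 - exp (- depth a)) + exp (C * h) * (exp (- depth a) - exp (- depth s))"
      using a Suc.prems
      by (intro add_mono Suc.IH attenuated_rate_integral_Ioc_le) (auto simp: a_def)
    finally show ?case
      by (simp add: algebra_simps)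
  qed
  moreover obtain n :: nat where "s / h \<le> real n"
    using real_arch_simple by blast
  ultimately show ?thesis
    using assms by (simp add: field_simps)
qed

end

lemma integral_mult_ge_neg:
  fixes w k :: "'a \<Rightarrow> real"
  assumes "integrable M w" "AE x in M. 0 \<le> w x \<and> - B \<le> k x"
    and "integral\<^sup>L M w \<le> W" "0 \<le> B" "0 \<le> W"
  shows "- (B * W) \<le> (\<integral>x. w x * k x \<partial>M)"
proof (cases "integrable M (\<lambda>x. w x * k x)")
  case True
  have "- (B * W) \<le> - B * integral\<^sup>L M w"
    using assms(3,4) by (simp add: mult_left_mono)
  also have "\<dots> = (\<integral>x. - B * w x \<partial>M)"
    by simp
  also have "\<dots> \<le> (\<integral>x. w x * k x \<partial>M)"
    using assms(1) True
  proof (intro integral_mono_AE)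
    show "AE x in M. - B * w x \<le> w x * k x"
      using assms(2) by eventually_elim (use mult_left_mono[of "- B" _ "w _"] in \<open>auto simp: mult.commute\<close>)
  qed auto
  finally show ?thesis .
next
  case False
  then show ?thesis
    using assms(4,5) by (simp add: not_integrable_integral_eq)
qed

lemma set_integral_mult_ge_neg:
  fixes w k :: "'a \<Rightarrow> real"
  assumes "set_integrable M A w" "AE x in M. x \<in> A \<longrightarrow> 0 \<le> w x \<and> - B \<le> k x"
    and "(LINT x:A|M. w x) \<le> W" "0 \<le> B" "0 \<le> W"
  shows "- (B * W) \<le> (LINT x:A|M. w x * k x)"
proof -
  have "- (B * W) \<le> (\<integral>x. (indicator A x * w x) * (if x \<in> A then k x else 0) \<partial>M)"
    using assms unfolding set_integrable_def set_lebesgue_integral_def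
    by (intro integral_mult_ge_neg) (auto simp: indicator_def elim!: eventually_mono)
  also have "\<dots> = (LINT x:A|M. w x * k x)"
    unfolding set_lebesgue_integral_def by (rule Bochner_Integration.integral_cong) (auto simp: indicator_def)
  finally show ?thesis .
qed

lemma scattered_fraction_le:
  fixes a s :: "real \<Rightarrow> real"
  assumes [measurable]: "a \<in> borel_measurable borel" "s \<in> borel_measurable borel"
    and "0 < h" "0 \<le> \<tau>" "0 < alo" "alo \<le> ahi" "0 \<le> shi"
    and bounds: "AE t in lborel. t \<in> {0..\<tau>} \<longrightarrow> alo \<le> a t \<and> a t \<le> ahi \<and> 0 \<le> s t \<and> s t \<le> shi"
  shows "set_integrable lborel {0..\<tau>} (\<lambda>t. exp (- (LINT r:{0..t}|lborel. a r + s r)) * s t)"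
    and "(LINT t:{0..\<tau>}|lborel. exp (- (LINT r:{0..t}|lborel. a r + s r)) * s t)
      \<le> shi / (alo + shi) * exp ((ahi + shi) * h)"
proof -
  interpret bounded_rate "\<lambda>r. a r + s r" "ahi + shi" \<tau>
    using bounds assms(5-7) by unfold_locales (auto elim!: eventually_mono)
  define q where "q = shi / (alo + shi)"
  have q: "0 \<le> q"
    using \<open>0 < alo\<close> \<open>0 \<le> shi\<close> by (simp add: q_def)
  have fraction: "s t \<le> q * (a t + s t)" if "alo \<le> a t" "s t \<le> shi" for t
  proof -
    have "s t * alo \<le> shi * a t"
      using that \<open>0 < alo\<close> \<open>0 \<le> shi\<close> by (intro mult_mono) auto
    then show ?thesis
      using \<open>0 < alo\<close> \<open>0 \<le> shi\<close> by (simp add: q_def field_simps)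
  qed
  have integrable: "set_integrable lborel {0..\<tau>} (\<lambda>t. exp (- depth t) * s t)"
    using bounds by (intro set_integrable_attenuated[where B = shi]) (auto elim!: eventually_mono)
  then show "set_integrable lborel {0..\<tau>} (\<lambda>t. exp (- (LINT r:{0..t}|lborel. a r + s r)) * s t)"
    by (simp add: depth_def)
  have "(LINT t:{0..\<tau>}|lborel. exp (- depth t) * s t)
      \<le> (LINT t:{0..\<tau>}|lborel. q * (exp (- depth t) * (a t + s t)))"
    using bounds
    by (intro set_integral_mono_AE integrable set_integrable_mult_right set_integrable_attenuated_rate)
      (auto elim!: eventually_mono dest!: fraction simp: mult.left_commute)
  also have "\<dots> = q * (LINT t:{0..\<tau>}|lborel. exp (- depth t) * (a t + s t))"
    by simp
  also have "\<dots> \<le> q * (exp ((ahi + shi) * h) * (1 - exp (- depth \<tau>)))"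
    using attenuated_rate_integral_le[OF \<open>0 < h\<close> \<open>0 \<le> \<tau>\<close> order.refl] q by (rule mult_left_mono)
  also have "\<dots> \<le> q * exp ((ahi + shi) * h)"
    using q by (intro mult_left_mono) auto
  finally show "(LINT t:{0..\<tau>}|lborel. exp (- (LINT r:{0..t}|lborel. a r + s r)) * s t)
      \<le> shi / (alo + shi) * exp ((ahi + shi) * h)"
    by (simp add: depth_def q_def)
qed

lemma attenuation_ge:
  fixes a s :: "real \<Rightarrow> real"
  assumes "a \<in> borel_measurable borel" "s \<in> borel_measurable borel"
    and "0 \<le> \<tau>" "0 \<le> ahi + shi"
    and "AE t in lborel. t \<in> {0..\<tau>} \<longrightarrow> 0 \<le> a t \<and> a t \<le> ahi \<and> 0 \<le> s t \<and> s t \<le> shi"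
  shows "exp (- ((ahi + shi) * \<tau>)) \<le> exp (- (LINT r:{0..\<tau>}|lborel. a r + s r))"
proof -
  interpret bounded_rate "\<lambda>r. a r + s r" "ahi + shi" \<tau>
    using assms by unfold_locales (auto elim!: eventually_mono)
  show ?thesis
    using exp_neg_depth_ge[OF \<open>0 \<le> \<tau>\<close> order.refl] by (simp add: depth_def)
qed

lemma scattering_term_ge:
  fixes a s k :: "real \<Rightarrow> real"
  assumes "a \<in> borel_measurable borel" "s \<in> borel_measurable borel"
    and "0 < h" "0 \<le> \<tau>" "0 < alo" "alo \<le> ahi" "0 \<le> shi" "0 \<le> M"
    and bounds: "AE t in lborel. t \<in> {0..\<tau>} \<longrightarrow> alo \<le> a t \<and> a t \<le> ahi \<and> 0 \<le> s t \<and> s t \<le> shi \<and> - M \<le> k t"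
  shows "- (M * (shi / (alo + shi) * exp ((ahi + shi) * h)))
      \<le> (LINT t:{0..\<tau>}|lborel. exp (- (LINT r:{0..t}|lborel. a r + s r)) * s t * k t)"
proof -
  have fraction_bounds: "AE t in lborel. t \<in> {0..\<tau>} \<longrightarrow> alo \<le> a t \<and> a t \<le> ahi \<and> 0 \<le> s t \<and> s t \<le> shi"
    using bounds by (auto elim!: eventually_mono)
  note fraction = scattered_fraction_le[OF assms(1-7) fraction_bounds]
  show ?thesis
    using assms(5,7,8) bounds
    by (intro set_integral_mult_ge_neg fraction) (auto elim!: eventually_mono)
qed

section \<open>Differentiability from continuous partial derivatives\<close>

lemma mvt_abs_le:
  fixes g g' :: "real \<Rightarrow> real"
  assumes deriv: "\<And>t. (g has_real_derivative g' t) (at t)"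
    and bound: "\<And>t. t \<in> closed_segment 0 c \<Longrightarrow> \<bar>g' t - L\<bar> \<le> e"
  shows "\<bar>g c - g 0 - c * L\<bar> \<le> e * \<bar>c\<bar>"
proof -
  define \<phi> where "\<phi> s = g s - s * L" for s
  have deriv_\<phi>: "(\<phi> has_real_derivative (g' t - L)) (at t)" for t
    unfolding \<phi>_def[abs_def] by (auto intro!: derivative_eq_intros deriv)
  obtain z where z: "z \<in> closed_segment 0 c" "\<phi> c - \<phi> 0 = c * (g' z - L)"
  proof (cases c "0::real" rule: linorder_cases)
    case less
    with MVT2[OF less, of \<phi> "\<lambda>t. g' t - L"] deriv_\<phi>
    obtain z where "c < z" "z < 0" "\<phi> 0 - \<phi> c = (0 - c) * (g' z - L)"
      by blast
    then show ?thesis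
      by (intro that[of z]) (auto simp: closed_segment_eq_real_ivl algebra_simps)
  next
    case greater
    with MVT2[OF greater, of \<phi> "\<lambda>t. g' t - L"] deriv_\<phi>
    obtain z where "0 < z" "z < c" "\<phi> c - \<phi> 0 = (c - 0) * (g' z - L)"
      by blast
    then show ?thesis
      by (intro that[of z]) (auto simp: closed_segment_eq_real_ivl)
  qed (use that in auto)
  then have "g c - g 0 - c * L = c * (g' z - L)"
    by (simp add: \<phi>_def algebra_simps)
  then have "\<bar>g c - g 0 - c * L\<bar> = \<bar>c\<bar> * \<bar>g' z - L\<bar>"
    by (simp add: abs_mult)
  also have "\<dots> \<le> \<bar>c\<bar> * e"
    using bound[OF z(1)] by (rule mult_left_mono) simp
  finally show ?thesis
    by (simp add: mult.commute)
qed

lemma inner_sum_Basis_subset: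
  fixes h :: "'a::euclidean_space"
  assumes "S \<subseteq> Basis" "b \<in> Basis"
  shows "(\<Sum>b'\<in>S. (h \<bullet> b') *\<^sub>R b') \<bullet> b = (if b \<in> S then h \<bullet> b else 0)"
proof -
  have "finite S"
    using assms(1) finite_Basis by (rule finite_subset)
  moreover have "(h \<bullet> b') * (b' \<bullet> b) = (if b' = b then h \<bullet> b else 0)" if "b' \<in> S" for b'
    using assms that by (auto simp: inner_Basis)
  ultimately show ?thesis
    by (simp add: inner_sum_left sum.delta' cong: sum.cong)
qed

lemma increment_le_partials:
  fixes f :: "'a::euclidean_space \<Rightarrow> real"
  assumes partial: "\<And>x b. b \<in> Basis \<Longrightarrow> ((\<lambda>t. f (x + t *\<^sub>R b)) has_real_derivative P b x) (at 0)"
    and close: "\<And>z b. dist z y < d \<Longrightarrow> b \<in> Basis \<Longrightarrow> \<bar>P b z - P b y\<bar> \<le> e"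
    and "norm h < d"
  shows "\<bar>f (y + h) - f y - (\<Sum>b\<in>Basis. (h \<bullet> b) * P b y)\<bar> \<le> e * (\<Sum>b\<in>Basis. \<bar>h \<bullet> b\<bar>)"
proof -
  have partial_at: "((\<lambda>s. f (z + s *\<^sub>R b)) has_real_derivative P b (z + t *\<^sub>R b)) (at t)"
    if "b \<in> Basis" for z b t
    using DERIV_shift[of "\<lambda>s. f (z + s *\<^sub>R b)" "P b (z + t *\<^sub>R b)" 0 t] partial[OF that, of "z + t *\<^sub>R b"]
    by (simp add: algebra_simps scaleR_add_left)
  \<comment> \<open>Move from \<open>y\<close> to \<open>y + h\<close> one coordinate at a time, applying the mean value theorem on each
    coordinate segment; all intermediate points stay within distance \<open>|h|\<close> of \<open>y\<close>.\<close>
  define p where "p S = (\<Sum>b\<in>S. (h \<bullet> b) *\<^sub>R b)" for S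
  have "\<bar>f (y + p S) - f y - (\<Sum>b\<in>S. (h \<bullet> b) * P b y)\<bar> \<le> e * (\<Sum>b\<in>S. \<bar>h \<bullet> b\<bar>)"
    if "S \<subseteq> Basis" for S
  proof -
    have "finite S"
      using that finite_Basis by (rule finite_subset)
    then show ?thesis
      using that
    proof (induction S rule: finite_induct)
      case empty
      then show ?case by (simp add: p_def)
    next
      case (insert b' S)
      define z where "z = y + p S"
      have b': "b' \<in> Basis" and S: "S \<subseteq> Basis"
        using insert.prems by auto
      have step: "\<bar>f (z + (h \<bullet> b') *\<^sub>R b') - f z - (h \<bullet> b') * P b' y\<bar> \<le> e * \<bar>h \<bullet> b'\<bar>"
      proof (rule mvt_abs_le[where g = "\<lambda>s. f (z + s *\<^sub>R b')", OF partial_at[OF b'], simplified])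
        fix t assume t: "t \<in> closed_segment 0 (h \<bullet> b')"
        have "norm (p S + t *\<^sub>R b') \<le> norm h"
        proof (rule norm_le_componentwise)
          fix b :: 'a assume "b \<in> Basis"
          moreover have "\<bar>t\<bar> \<le> \<bar>h \<bullet> b'\<bar>"
            using t by (auto simp: closed_segment_eq_real_ivl split: if_splits)
          ultimately show "\<bar>(p S + t *\<^sub>R b') \<bullet> b\<bar> \<le> \<bar>h \<bullet> b\<bar>"
            using b' insert.hyps(2) inner_sum_Basis_subset[OF S, of b h]
            by (auto simp: p_def inner_add_left inner_Basis)
        qed
        then show "\<bar>P b' (z + t *\<^sub>R b') - P b' y\<bar> \<le> e"
          using close b' \<open>norm h < d\<close> by (simp add: z_def dist_norm)
      qed
      have "y + p (insert b' S) = z + (h \<bullet> b') *\<^sub>R b'"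
        using insert.hyps by (simp add: p_def z_def algebra_simps)
      then show ?case
        using insert step by (simp add: z_def algebra_simps)
    qed
  qed
  from this[of Basis] show ?thesis
    by (simp add: p_def euclidean_representation)
qed

lemma has_derivative_continuous_partials:
  fixes f :: "'a::euclidean_space \<Rightarrow> real"
  assumes partial: "\<And>x b. b \<in> Basis \<Longrightarrow> ((\<lambda>t. f (x + t *\<^sub>R b)) has_real_derivative P b x) (at 0)"
    and continuous: "\<And>b. b \<in> Basis \<Longrightarrow> continuous_on UNIV (P b)"
  shows "(f has_derivative (\<lambda>h. \<Sum>b\<in>Basis. (h \<bullet> b) * P b y)) (at y)"
  unfolding has_derivative_at_alt
proof (intro conjI allI impI)
  show "bounded_linear (\<lambda>h. \<Sum>b\<in>Basis. (h \<bullet> b) * P b y)"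
    by (intro bounded_linear_sum bounded_linear_compose[OF bounded_linear_mult_left bounded_linear_inner_left])
  fix e :: real assume "0 < e"
  define e' where "e' = e / DIM('a)"
  have "0 < e'"
    using \<open>0 < e\<close> by (simp add: e'_def)
  have "\<forall>\<^sub>F z in at y. \<forall>b\<in>Basis. dist (P b z) (P b y) < e'"
    using continuous \<open>0 < e'\<close>
    by (intro eventually_ball_finite ballI) (auto simp: continuous_on_eq_continuous_at isCont_def tendstoD)
  then obtain d where "0 < d" and d: "\<And>z. z \<noteq> y \<Longrightarrow> dist z y < d \<Longrightarrow> \<forall>b\<in>Basis. dist (P b z) (P b y) < e'"
    by (auto simp: eventually_at)
  have close: "\<bar>P b z - P b y\<bar> \<le> e'" if "dist z y < d" "b \<in> Basis" for z b
    using d[of z] that \<open>0 < e'\<close> by (cases "z = y") (auto simp: dist_real_def)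
  show "\<exists>d>0. \<forall>y'. norm (y' - y) < d \<longrightarrow>
      norm (f y' - f y - (\<Sum>b\<in>Basis. ((y' - y) \<bullet> b) * P b y)) \<le> e * norm (y' - y)"
  proof (intro exI[of _ d] conjI allI impI)
    fix y' assume "norm (y' - y) < d"
    then have "\<bar>f y' - f y - (\<Sum>b\<in>Basis. ((y' - y) \<bullet> b) * P b y)\<bar> \<le> e' * (\<Sum>b\<in>Basis. \<bar>(y' - y) \<bullet> b\<bar>)"
      using increment_le_partials[OF partial close, where h = "y' - y"] by simp
    also have "\<dots> \<le> e' * (\<Sum>b\<in>(Basis::'a set). norm (y' - y))"
      using \<open>0 < e'\<close> by (intro mult_left_mono sum_mono Basis_le_norm) auto
    also have "\<dots> = e * norm (y' - y)"
      by (simp add: e'_def)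
    finally show "norm (f y' - f y - (\<Sum>b\<in>Basis. ((y' - y) \<bullet> b) * P b y)) \<le> e * norm (y' - y)"
      by simp
  qed (rule \<open>0 < d\<close>)
qed

lemma has_derivative_grad:
  fixes f :: "'a::euclidean_space \<Rightarrow> real"
  assumes "(f has_derivative f') (at y)"
  shows "(f has_derivative (\<lambda>w. grad f y \<bullet> w)) (at y)"
proof -
  interpret bounded_linear f'
    using has_derivative_bounded_linear[OF assms] .
  have "f' w = grad f y \<bullet> w" for w
  proof -
    have "f' w = f' (\<Sum>b\<in>Basis. (w \<bullet> b) *\<^sub>R b)"
      by (simp add: euclidean_representation)
    also have "\<dots> = (\<Sum>b\<in>Basis. (w \<bullet> b) * f' b)"
      by (simp add: sum scaleR)
    also have "\<dots> = grad f y \<bullet> w"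
      unfolding grad_def frechet_derivative_at[OF assms, symmetric] inner_sum_left
      by (simp add: inner_commute mult.commute)
    finally show ?thesis .
  qed
  then have "f' = (\<lambda>w. grad f y \<bullet> w)"
    by blast
  with assms show ?thesis
    by simp
qed

lemma smooth_fun_continuous: "smooth_fun f \<Longrightarrow> continuous_on UNIV f"
  unfolding smooth_fun_def by (metis empty_subsetI pderivs.simps(1) set_empty)

lemma smooth_fun_has_derivative:
  fixes f :: "'a::euclidean_space \<Rightarrow> real"
  assumes "smooth_fun f"
  shows "(f has_derivative (\<lambda>w. grad f y \<bullet> w)) (at y)"
proof -
  have "((\<lambda>t. f (x + t *\<^sub>R b)) has_real_derivative pderivs [b] f x) (at 0)" if "b \<in> Basis" for x b
    using assms that unfolding smooth_fun_def
    by (auto simp: DERIV_deriv_iff_real_differentiable dest!: spec[of _ "[]"])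
  moreover have "continuous_on UNIV (pderivs [b] f)" if "b \<in> Basis" for b
    using assms that unfolding smooth_fun_def by (auto dest!: spec[of _ "[b]"])
  ultimately show ?thesis
    by (rule has_derivative_grad[OF has_derivative_continuous_partials])
qed

section \<open>Exit points of convex domains\<close>

lemma ray_parameter_le:
  fixes \<Omega> :: "'a::euclidean_space set"
  assumes "\<forall>z\<in>\<Omega>. norm z \<le> R" "x \<in> \<Omega>" "norm v = 1" "0 \<le> t" "x - t *\<^sub>R v \<in> \<Omega>"
  shows "t \<le> 2 * R"
proof -
  have "t = norm (x - (x - t *\<^sub>R v))"
    using assms(3,4) by simp
  also have "\<dots> \<le> norm x + norm (x - t *\<^sub>R v)"
    by (rule norm_triangle_ineq4)
  also have "\<dots> \<le> 2 * R"
    using assms(1) bspec[OF assms(1,2)] bspec[OF assms(1,5)] by linarith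
  finally show ?thesis .
qed

lemma bdd_above_ray_parameters:
  fixes \<Omega> :: "'a::euclidean_space set"
  assumes "\<forall>z\<in>\<Omega>. norm z \<le> R" "x \<in> \<Omega>" "norm v = 1"
  shows "bdd_above {t. 0 \<le> t \<and> x - t *\<^sub>R v \<in> \<Omega>}"
  using ray_parameter_le[OF assms] by (auto simp: bdd_above_def)

lemma tau_minus_le:
  fixes \<Omega> :: "'a::euclidean_space set"
  assumes "\<forall>z\<in>\<Omega>. norm z \<le> R" "x \<in> \<Omega>" "norm v = 1"
  shows "tau_minus \<Omega> x v \<le> 2 * R"
  unfolding tau_minus_def using ray_parameter_le[OF assms] assms(2)
  by (intro cSup_least) auto

lemma tau_minus_pos:
  fixes \<Omega> :: "'a::euclidean_space set"
  assumes "open \<Omega>" "\<forall>z\<in>\<Omega>. norm z \<le> R" "x \<in> \<Omega>" "norm v = 1"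
  shows "0 < tau_minus \<Omega> x v"
proof -
  obtain e where "0 < e" "ball x e \<subseteq> \<Omega>"
    using assms(1,3) open_contains_ball by blast
  then have "x - (e / 2) *\<^sub>R v \<in> \<Omega>"
    using assms(4) by (auto simp: dist_norm)
  then have "e / 2 \<le> tau_minus \<Omega> x v"
    unfolding tau_minus_def using \<open>0 < e\<close>
    by (intro cSup_upper bdd_above_ray_parameters[OF assms(2-4)]) auto
  with \<open>0 < e\<close> show ?thesis
    by simp
qed

lemma ray_before_exit_in_convex:
  fixes \<Omega> :: "'a::euclidean_space set"
  assumes "convex \<Omega>" "\<forall>z\<in>\<Omega>. norm z \<le> R" "x \<in> \<Omega>" "norm v = 1"
    and "0 \<le> t" "t < tau_minus \<Omega> x v"
  shows "x - t *\<^sub>R v \<in> \<Omega>"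
proof -
  obtain t' where "0 \<le> t'" "x - t' *\<^sub>R v \<in> \<Omega>" "t < t'"
    using assms(6) less_cSup_iff[OF _ bdd_above_ray_parameters[OF assms(2-4)]] assms(3)
    unfolding tau_minus_def by force
  moreover have "x - t *\<^sub>R v = (1 - t / t') *\<^sub>R x + (t / t') *\<^sub>R (x - t' *\<^sub>R v)"
    using \<open>t < t'\<close> assms(5) by (simp add: algebra_simps)
  ultimately show ?thesis
    using assms(1,3,5) unfolding convex_alt by simp
qed

lemma exit_point_in_frontier:
  fixes \<Omega> :: "'a::euclidean_space set"
  assumes "open \<Omega>" "convex \<Omega>" "\<forall>z\<in>\<Omega>. norm z \<le> R" "x \<in> \<Omega>" "norm v = 1"
  shows "x - tau_minus \<Omega> x v *\<^sub>R v \<in> frontier \<Omega>"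
proof -
  define \<tau> where "\<tau> = tau_minus \<Omega> x v"
  have "0 < \<tau>"
    using tau_minus_pos[OF assms(1,3-5)] by (simp add: \<tau>_def)
  have "x - \<tau> *\<^sub>R v \<notin> \<Omega>"
  proof
    assume "x - \<tau> *\<^sub>R v \<in> \<Omega>"
    then obtain e where "0 < e" "ball (x - \<tau> *\<^sub>R v) e \<subseteq> \<Omega>"
      using assms(1) open_contains_ball by blast
    then have "x - (\<tau> + e / 2) *\<^sub>R v \<in> \<Omega>"
      using assms(5) by (auto simp: dist_norm algebra_simps)
    then have "\<tau> + e / 2 \<le> \<tau>"
      unfolding \<tau>_def tau_minus_def using \<open>0 < e\<close> \<open>0 < \<tau>\<close>
      by (intro cSup_upper bdd_above_ray_parameters[OF assms(3-5)]) (auto simp: \<tau>_def tau_minus_def)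
    with \<open>0 < e\<close> show False
      by simp
  qed
  moreover have "x - \<tau> *\<^sub>R v \<in> closure \<Omega>"
    unfolding closure_approachable
  proof (intro allI impI)
    fix \<epsilon> :: real assume "0 < \<epsilon>"
    define t where "t = max 0 (\<tau> - \<epsilon> / 2)"
    have t: "0 \<le> t" "t < \<tau>" "\<tau> - t < \<epsilon>"
      using \<open>0 < \<epsilon>\<close> \<open>0 < \<tau>\<close> by (auto simp: t_def)
    then have "x - t *\<^sub>R v \<in> \<Omega>"
      using ray_before_exit_in_convex[OF assms(2-5)] by (simp add: \<tau>_def)
    moreover have "dist (x - t *\<^sub>R v) (x - \<tau> *\<^sub>R v) = \<tau> - t"
      using t assms(5) by (simp add: dist_norm algebra_simps flip: scaleR_diff_left)
    ultimately show "\<exists>y\<in>\<Omega>. dist y (x - \<tau> *\<^sub>R v) < \<epsilon>"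
      using t by (intro bexI[of _ "x - t *\<^sub>R v"]) auto
  qed
  ultimately show ?thesis
    using assms(1) by (simp add: \<tau>_def frontier_def interior_open)
qed

lemma defining_function_frontier:
  assumes "defining_function \<Omega> \<rho>" "open \<Omega>" "y \<in> frontier \<Omega>"
  shows "\<rho> y = 0"
proof -
  have "\<Omega> = {z. \<rho> z < 0}" and "continuous_on UNIV \<rho>"
    using assms(1) smooth_fun_continuous by (auto simp: defining_function_def)
  then have "closure \<Omega> \<subseteq> {z. \<rho> z \<le> 0}"
    by (intro closure_minimal) (auto intro: closed_Collect_le continuous_on_const)
  then show ?thesis
    using assms(2,3) \<open>\<Omega> = {z. \<rho> z < 0}\<close>
    by (fastforce simp: frontier_def interior_open)
qed

lemma DERIV_nonpos_if_less_right:
  fixes \<phi> :: "real \<Rightarrow> real"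
  assumes "(\<phi> has_real_derivative D) (at 0)" and less: "\<And>s. 0 < s \<Longrightarrow> s < 1 \<Longrightarrow> \<phi> s < \<phi> 0"
  shows "D \<le> 0"
proof (rule ccontr)
  assume "\<not> D \<le> 0"
  with DERIV_pos_inc_right[OF assms(1)]
  obtain d where "0 < d" and increasing: "\<And>h. 0 < h \<Longrightarrow> h < d \<Longrightarrow> \<phi> 0 < \<phi> h"
    by auto
  define s where "s = min (d / 2) (1 / 2)"
  have "0 < s" "s < d" "s < 1"
    using \<open>0 < d\<close> by (auto simp: s_def)
  with less increasing show False
    by (meson less_asym)
qed

lemma grad_inner_exit_direction_neg:
  fixes \<rho> :: "'a::euclidean_space \<Rightarrow> real"
  assumes "open \<Omega>" "convex \<Omega>" and \<Omega>: "\<Omega> = {z. \<rho> z < 0}"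
    and deriv: "(\<rho> has_derivative (\<lambda>w. n \<bullet> w)) (at y)" and "\<rho> y = 0" "n \<noteq> 0"
    and "y \<in> closure \<Omega>" "x \<in> \<Omega>" "y = x - \<tau> *\<^sub>R v" "0 < \<tau>"
  shows "n \<bullet> v < 0"
proof -
  obtain e where "0 < e" "ball x e \<subseteq> \<Omega>"
    using assms(1,8) open_contains_ball by blast
  define z where "z = x + (e / (2 * norm n)) *\<^sub>R n"
  have "z \<in> \<Omega>"
    using \<open>0 < e\<close> \<open>ball x e \<subseteq> \<Omega>\<close> \<open>n \<noteq> 0\<close> by (auto simp: z_def dist_norm)
  define w where "w = z - y"
  \<comment> \<open>The open segment from \<open>y\<close> to the interior point \<open>z\<close> lies in \<open>\<Omega>\<close>, so \<open>\<rho>\<close> cannot increase along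
    \<open>w\<close>, whereas \<open>n \<bullet> w\<close> exceeds \<open>\<tau> (n \<bullet> v)\<close> by \<open>e |n| / 2\<close>.\<close>
  have inside: "\<rho> (y + s *\<^sub>R w) < \<rho> y" if "0 < s" "s < 1" for s
  proof -
    have "y + s *\<^sub>R w \<in> open_segment z y"
      using that \<open>z \<in> \<Omega>\<close> \<open>\<rho> y = 0\<close> \<Omega>
      by (auto simp: in_segment w_def algebra_simps intro!: exI[of _ "1 - s"])
    moreover have "open_segment z y \<subseteq> \<Omega>"
      using in_interior_closure_convex_segment[OF assms(2) _ \<open>y \<in> closure \<Omega>\<close>] \<open>z \<in> \<Omega>\<close> assms(1)
      by (simp add: interior_open)
    ultimately show ?thesis
      using \<Omega> \<open>\<rho> y = 0\<close> by auto
  qed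
  have line: "((\<lambda>s. y + s *\<^sub>R w) has_derivative (\<lambda>s. s *\<^sub>R w)) (at 0)"
    by (auto intro!: derivative_eq_intros)
  have "(\<rho> has_derivative (\<lambda>w'. n \<bullet> w')) (at ((\<lambda>s. y + s *\<^sub>R w) 0))"
    using deriv by simp
  from has_derivative_compose[OF line this]
  have "((\<lambda>s. \<rho> (y + s *\<^sub>R w)) has_derivative (\<lambda>s. n \<bullet> (s *\<^sub>R w))) (at 0)"
    by simp
  moreover have "(\<lambda>s. n \<bullet> (s *\<^sub>R w)) = (*) (n \<bullet> w)"
    by (auto simp: mult.commute)
  ultimately have "((\<lambda>s. \<rho> (y + s *\<^sub>R w)) has_real_derivative n \<bullet> w) (at 0)"
    by (simp add: has_field_derivative_def)
  then have "n \<bullet> w \<le> 0"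
    by (rule DERIV_nonpos_if_less_right) (use inside in simp)
  moreover have "n \<bullet> w = \<tau> * (n \<bullet> v) + e / (2 * norm n) * (n \<bullet> n)"
    by (simp add: w_def z_def assms(9) inner_add_right inner_diff_right)
  moreover have "0 < e / (2 * norm n) * (n \<bullet> n)"
    using \<open>0 < e\<close> \<open>n \<noteq> 0\<close> by simp
  ultimately have "\<tau> * (n \<bullet> v) < 0"
    by linarith
  with \<open>0 < \<tau>\<close> show ?thesis
    by (simp add: mult_less_0_iff)
qed

lemma exit_point_in_Gamma_minus:
  fixes \<Omega> :: "'a::euclidean_space set"
  assumes "open \<Omega>" "convex \<Omega>" "smooth_domain \<Omega>" "\<forall>z\<in>\<Omega>. norm z \<le> R" "x \<in> \<Omega>" "norm v = 1"
  shows "(x - tau_minus \<Omega> x v *\<^sub>R v, v) \<in> Gamma_minus \<Omega>"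
proof -
  define y where "y = x - tau_minus \<Omega> x v *\<^sub>R v"
  define \<rho> where "\<rho> = (SOME \<rho>. defining_function \<Omega> \<rho>)"
  have \<rho>: "defining_function \<Omega> \<rho>"
    using assms(3) unfolding smooth_domain_def \<rho>_def by (rule someI_ex)
  have y: "y \<in> frontier \<Omega>"
    using exit_point_in_frontier[OF assms(1,2,4-6)] by (simp add: y_def)
  then have "\<rho> y = 0"
    using defining_function_frontier[OF \<rho> assms(1)] by blast
  then have "grad \<rho> y \<noteq> 0"
    using \<rho> by (simp add: defining_function_def)
  moreover have "grad \<rho> y \<bullet> v < 0"
  proof (rule grad_inner_exit_direction_neg[OF assms(1,2)])
    show "\<Omega> = {z. \<rho> z < 0}" "(\<rho> has_derivative (\<bullet>) (grad \<rho> y)) (at y)"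
      using \<rho> smooth_fun_has_derivative by (auto simp: defining_function_def)
    show "y \<in> closure \<Omega>"
      using y by (simp add: frontier_def)
  qed (use \<open>\<rho> y = 0\<close> \<open>grad \<rho> y \<noteq> 0\<close> assms(5) y_def tau_minus_pos[OF assms(1,4-6)] in auto)
  ultimately have "- (outer_normal \<Omega> y \<bullet> v) > 0"
    by (simp add: outer_normal_def \<rho>_def[symmetric] mult_pos_neg)
  with y assms(6) show ?thesis
    by (simp add: Gamma_minus_def y_def)
qed

section \<open>Positivity of the transport solution\<close>

lemma scat_op_ge:
  assumes "AE v' in sphere_measure. 0 \<le> \<Theta> v v'" "(\<integral>v'. \<Theta> v v' \<partial>sphere_measure) = 1"
    and "AE v' in sphere_measure. - M \<le> u x v'" "0 \<le> M"
  shows "- M \<le> scat_op \<Theta> u x v"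
proof -
  have "integrable sphere_measure (\<Theta> v)"
    using assms(2) not_integrable_integral_eq[of sphere_measure "\<Theta> v"] by force
  then have "- (M * 1) \<le> scat_op \<Theta> u x v"
    unfolding scat_op_def using assms by (intro integral_mult_ge_neg) (auto elim!: eventually_mono)
  then show ?thesis
    by simp
qed

lemma transport_solution_ray_lower_bound:
  fixes \<Omega> :: "'a::euclidean_space set" and \<sigma>s \<Sigma>a :: "'a \<Rightarrow> real" and \<Theta> g u :: "'a \<Rightarrow> 'a \<Rightarrow> real"
  assumes \<Omega>: "open \<Omega>" "convex \<Omega>" "smooth_domain \<Omega>" "\<forall>z\<in>\<Omega>. norm z \<le> R"
    and [measurable]: "\<Sigma>a \<in> borel_measurable borel" "\<sigma>s \<in> borel_measurable borel"
    and constants: "0 < alo" "alo \<le> ahi" "0 \<le> shi" "0 < h" "0 \<le> M" "0 \<le> gl"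
    and boundary: "\<And>y v. (y, v) \<in> Gamma_minus \<Omega> \<Longrightarrow> gl \<le> g y v"
    and x: "x \<in> \<Omega>" and v: "norm v = 1"
    and kernel: "AE v' in sphere_measure. 0 \<le> \<Theta> v v'" "(\<integral>v'. \<Theta> v v' \<partial>sphere_measure) = 1"
    and along: "AE t in lborel. x - t *\<^sub>R v \<in> \<Omega> \<longrightarrow>
      alo \<le> \<Sigma>a (x - t *\<^sub>R v) \<and> \<Sigma>a (x - t *\<^sub>R v) \<le> ahi \<and> 0 \<le> \<sigma>s (x - t *\<^sub>R v) \<and> \<sigma>s (x - t *\<^sub>R v) \<le> shi
      \<and> (AE v' in sphere_measure. - M \<le> u (x - t *\<^sub>R v) v')"
    and solution: "u x v = exp (- (LINT s:{0..tau_minus \<Omega> x v}|lborel. \<Sigma>a (x - s *\<^sub>R v) + \<sigma>s (x - s *\<^sub>R v)))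
        * g (x - tau_minus \<Omega> x v *\<^sub>R v) v
      + (LINT t:{0..tau_minus \<Omega> x v}|lborel. exp (- (LINT s:{0..t}|lborel. \<Sigma>a (x - s *\<^sub>R v) + \<sigma>s (x - s *\<^sub>R v)))
        * \<sigma>s (x - t *\<^sub>R v) * scat_op \<Theta> u (x - t *\<^sub>R v) v)"
  shows "exp (- ((ahi + shi) * (2 * R))) * gl - M * (shi / (alo + shi) * exp ((ahi + shi) * h)) \<le> u x v"
proof -
  define \<tau> where "\<tau> = tau_minus \<Omega> x v"
  have "0 < \<tau>" "\<tau> \<le> 2 * R"
    using tau_minus_pos[OF \<Omega>(1,4) x v] tau_minus_le[OF \<Omega>(4) x v] by (simp_all add: \<tau>_def)
  have ray_measurable: "(\<lambda>t. \<Sigma>a (x - t *\<^sub>R v)) \<in> borel_measurable borel" "(\<lambda>t. \<sigma>s (x - t *\<^sub>R v)) \<in> borel_measurable borel"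
    by measurable measurable
  have bounds: "AE t in lborel. t \<in> {0..\<tau>} \<longrightarrow>
      alo \<le> \<Sigma>a (x - t *\<^sub>R v) \<and> \<Sigma>a (x - t *\<^sub>R v) \<le> ahi \<and> 0 \<le> \<sigma>s (x - t *\<^sub>R v) \<and> \<sigma>s (x - t *\<^sub>R v) \<le> shi
      \<and> - M \<le> scat_op \<Theta> u (x - t *\<^sub>R v) v"
    using along AE_lborel_singleton[of \<tau>]
  proof eventually_elim
    case (elim t)
    show ?case
    proof
      assume "t \<in> {0..\<tau>}"
      with elim(2) have "x - t *\<^sub>R v \<in> \<Omega>"
        using ray_before_exit_in_convex[OF \<Omega>(2,4) x v] by (auto simp: \<tau>_def)
      with elim(1) scat_op_ge[of \<Theta> v M u "x - t *\<^sub>R v"] kernel \<open>0 \<le> M\<close> show "alo \<le> \<Sigma>a (x - t *\<^sub>R v) \<and> \<Sigma>a (x - t *\<^sub>R v) \<le> ahi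
          \<and> 0 \<le> \<sigma>s (x - t *\<^sub>R v) \<and> \<sigma>s (x - t *\<^sub>R v) \<le> shi \<and> - M \<le> scat_op \<Theta> u (x - t *\<^sub>R v) v"
        by simp
    qed
  qed
  have "exp (- ((ahi + shi) * (2 * R))) \<le> exp (- ((ahi + shi) * \<tau>))"
    using \<open>\<tau> \<le> 2 * R\<close> constants by (simp add: mult_left_mono)
  also have "\<dots> \<le> exp (- (LINT s:{0..\<tau>}|lborel. \<Sigma>a (x - s *\<^sub>R v) + \<sigma>s (x - s *\<^sub>R v)))"
    using \<open>0 < \<tau>\<close> constants bounds by (intro attenuation_ge[OF ray_measurable]) (auto elim!: eventually_mono)
  finally have "exp (- ((ahi + shi) * (2 * R))) * gl
      \<le> exp (- (LINT s:{0..\<tau>}|lborel. \<Sigma>a (x - s *\<^sub>R v) + \<sigma>s (x - s *\<^sub>R v))) * g (x - \<tau> *\<^sub>R v) v"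
    using boundary[OF exit_point_in_Gamma_minus[OF \<Omega>(1-4) x v]] \<open>0 \<le> gl\<close>
    by (intro mult_mono) (auto simp: \<tau>_def)
  moreover have "- (M * (shi / (alo + shi) * exp ((ahi + shi) * h)))
      \<le> (LINT t:{0..\<tau>}|lborel. exp (- (LINT s:{0..t}|lborel. \<Sigma>a (x - s *\<^sub>R v) + \<sigma>s (x - s *\<^sub>R v)))
        * \<sigma>s (x - t *\<^sub>R v) * scat_op \<Theta> u (x - t *\<^sub>R v) v)"
    using \<open>0 < \<tau>\<close> constants by (intro scattering_term_ge[OF ray_measurable _ _ _ _ _ _ bounds]) auto
  ultimately show ?thesis
    using solution by (simp add: \<tau>_def)
qed

lemma transport_solution_lower_bound_step:
  fixes \<Omega> :: "'a::euclidean_space set" and \<sigma>s \<Sigma>a :: "'a \<Rightarrow> real" and \<Theta> g u :: "'a \<Rightarrow> 'a \<Rightarrow> real"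
  assumes \<Omega>: "open \<Omega>" "convex \<Omega>" "smooth_domain \<Omega>" "\<forall>z\<in>\<Omega>. norm z \<le> R"
    and measurable: "\<Sigma>a \<in> borel_measurable borel" "\<sigma>s \<in> borel_measurable borel"
    and coefficients: "AE y in lborel. y \<in> \<Omega> \<longrightarrow> alo \<le> \<Sigma>a y \<and> \<Sigma>a y \<le> ahi \<and> 0 \<le> \<sigma>s y \<and> \<sigma>s y \<le> shi"
    and constants: "0 < alo" "alo \<le> ahi" "0 \<le> shi" "0 < h" "0 \<le> M" "0 \<le> gl"
    and boundary: "\<And>y v. (y, v) \<in> Gamma_minus \<Omega> \<Longrightarrow> gl \<le> g y v"
    and kernel: "AE v in sphere_measure. (AE v' in sphere_measure. 0 \<le> \<Theta> v v') \<and> (\<integral>v'. \<Theta> v v' \<partial>sphere_measure) = 1"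
    and solution: "is_transport_solution \<Omega> \<Sigma>a \<sigma>s \<Theta> g u"
    and lower: "AE (x, v) in lborel \<Otimes>\<^sub>M sphere_measure. x \<in> \<Omega> \<longrightarrow> - M \<le> u x v"
  shows "AE (x, v) in lborel \<Otimes>\<^sub>M sphere_measure. x \<in> \<Omega> \<longrightarrow>
    exp (- ((ahi + shi) * (2 * R))) * gl - M * (shi / (alo + shi) * exp ((ahi + shi) * h)) \<le> u x v"
proof -
  interpret pair_sigma_finite lborel "sphere_measure :: 'a measure" ..
  have "AE y in lborel. y \<in> \<Omega> \<longrightarrow> alo \<le> \<Sigma>a y \<and> \<Sigma>a y \<le> ahi \<and> 0 \<le> \<sigma>s y \<and> \<sigma>s y \<le> shi
      \<and> (AE v' in sphere_measure. - M \<le> u y v')"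
    using coefficients AE_pair[OF lower] by eventually_elim auto
  then have along: "AE (x, v) in lborel \<Otimes>\<^sub>M sphere_measure. AE t in lborel. x - t *\<^sub>R v \<in> \<Omega> \<longrightarrow>
      alo \<le> \<Sigma>a (x - t *\<^sub>R v) \<and> \<Sigma>a (x - t *\<^sub>R v) \<le> ahi \<and> 0 \<le> \<sigma>s (x - t *\<^sub>R v) \<and> \<sigma>s (x - t *\<^sub>R v) \<le> shi
      \<and> (AE v' in sphere_measure. - M \<le> u (x - t *\<^sub>R v) v')"
    by (rule AE_along_rays[OF sphere_measure.sigma_finite_measure_axioms sets_sphere_measure])
  have direction: "AE p in lborel \<Otimes>\<^sub>M sphere_measure. norm (snd p) = 1
      \<and> (AE v' in sphere_measure. 0 \<le> \<Theta> (snd p) v') \<and> (\<integral>v'. \<Theta> (snd p) v' \<partial>sphere_measure) = 1"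
    using AE_sphere_measure_norm kernel
    by (intro sphere_measure.AE_pair_measure_snd) (auto elim: AE_mp intro!: AE_I2)
  have "AE (x, v) in lborel \<Otimes>\<^sub>M sphere_measure. x \<in> \<Omega> \<longrightarrow>
      u x v = exp (- (LINT s:{0..tau_minus \<Omega> x v}|lborel. \<Sigma>a (x - s *\<^sub>R v) + \<sigma>s (x - s *\<^sub>R v)))
        * g (x - tau_minus \<Omega> x v *\<^sub>R v) v
      + (LINT t:{0..tau_minus \<Omega> x v}|lborel. exp (- (LINT s:{0..t}|lborel. \<Sigma>a (x - s *\<^sub>R v) + \<sigma>s (x - s *\<^sub>R v)))
        * \<sigma>s (x - t *\<^sub>R v) * scat_op \<Theta> u (x - t *\<^sub>R v) v)"
    using solution by (simp add: is_transport_solution_def Let_def)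
  then show ?thesis
    using along direction
  proof eventually_elim
    case (elim p)
    obtain x v where p: "p = (x, v)"
      by force
    show ?case
      unfolding p prod.case
    proof
      assume "x \<in> \<Omega>"
      with elim show "exp (- ((ahi + shi) * (2 * R))) * gl - M * (shi / (alo + shi) * exp ((ahi + shi) * h)) \<le> u x v"
        unfolding p by (intro transport_solution_ray_lower_bound[OF \<Omega> measurable constants boundary]) auto
    qed
  qed
qed

lemma positive_lower_bound_by_contraction:
  fixes P :: "real \<Rightarrow> bool"
  assumes mono: "\<And>a b. a \<le> b \<Longrightarrow> P b \<Longrightarrow> P a"
    and start: "P (- B)"
    and step: "\<And>M. 0 \<le> M \<Longrightarrow> P (- M) \<Longrightarrow> P (c - q * M)"
    and "0 < c" "0 \<le> q" "q < 1"
  shows "\<exists>c'>0. P c'"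
proof -
  define B' where "B' = max B 0"
  have iterate: "P (- (q ^ n * B'))" for n
  proof (induction n)
    case 0
    show ?case
      using mono[OF _ start] by (simp add: B'_def)
  next
    case (Suc n)
    have "P (c - q * (q ^ n * B'))"
      using Suc.IH \<open>0 \<le> q\<close> by (intro step) (simp add: B'_def)
    then show ?case
      using \<open>0 < c\<close> by (elim mono[rotated]) (simp add: mult.assoc)
  qed
  have "(\<lambda>n. q ^ n * B') \<longlonglongrightarrow> 0"
    using \<open>0 \<le> q\<close> \<open>q < 1\<close> by (intro tendsto_mult_left_zero LIMSEQ_power_zero) simp
  then have "\<forall>\<^sub>F n in sequentially. q ^ n * B' < c / 2"
    using \<open>0 < c\<close> by (intro order_tendstoD(2)) auto
  then obtain n where n: "q ^ n * B' < c / 2"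
    by (meson eventually_sequentially order.refl)
  have "q * (q ^ n * B') \<le> q ^ n * B'"
    using \<open>0 \<le> q\<close> \<open>q < 1\<close> by (intro mult_left_le_one_le) (auto simp: B'_def)
  with n have "P (c - q * (q ^ n * B'))"
    using iterate \<open>0 \<le> q\<close> by (intro step) (auto simp: B'_def)
  with n \<open>q * _ \<le> _\<close> have "P (c / 2)"
    by (elim mono[rotated]) simp
  with \<open>0 < c\<close> show ?thesis
    by (intro exI[of _ "c / 2"]) simp
qed

lemma exists_contracting_step_length:
  fixes q C :: real
  assumes "0 \<le> q" "q < 1" "0 < C"
  obtains h where "0 < h" "q * exp (C * h) < 1"
proof
  show "0 < ln (2 / (1 + q)) / C"
    using assms by simp
  have "q * exp (C * (ln (2 / (1 + q)) / C)) = 2 * q / (1 + q)"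
    using assms by simp
  also have "\<dots> < 1"
    using assms by simp
  finally show "q * exp (C * (ln (2 / (1 + q)) / C)) < 1" .
qed

lemma AE_kernel_nonneg:
  assumes "in_F (sphere_measure \<Otimes>\<^sub>M sphere_measure) (sphere 0 1 \<times> sphere 0 1) lo hi (\<lambda>(v, v'). \<Theta> v v')"
  shows "AE v in sphere_measure. AE v' in sphere_measure. 0 \<le> \<Theta> v v'"
proof -
  interpret pair_sigma_finite sphere_measure sphere_measure ..
  have "0 < lo"
    using assms by (simp add: in_F_def)
  have "AE v in sphere_measure. AE v' in sphere_measure. norm v = 1 \<and> norm v' = 1 \<longrightarrow> lo \<le> \<Theta> v v'"
    using assms by (auto simp: in_F_def dest!: AE_pair elim!: eventually_mono)
  then show ?thesis
    using AE_sphere_measure_norm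
  proof eventually_elim
    case (elim v)
    from elim(1) AE_sphere_measure_norm show ?case
      by eventually_elim (use elim(2) \<open>0 < lo\<close> in auto)
  qed
qed

lemma transport_solution_lower_bound:
  fixes \<Omega> :: "'a::euclidean_space set" and \<sigma>s \<Sigma>a :: "'a \<Rightarrow> real" and \<Theta> g u :: "'a \<Rightarrow> 'a \<Rightarrow> real"
  assumes \<Omega>: "open \<Omega>" "convex \<Omega>" "smooth_domain \<Omega>" "\<forall>z\<in>\<Omega>. norm z \<le> R"
    and measurable: "\<Sigma>a \<in> borel_measurable borel" "\<sigma>s \<in> borel_measurable borel"
    and coefficients: "AE y in lborel. y \<in> \<Omega> \<longrightarrow> alo \<le> \<Sigma>a y \<and> \<Sigma>a y \<le> ahi \<and> 0 \<le> \<sigma>s y \<and> \<sigma>s y \<le> shi"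
    and constants: "0 < alo" "alo \<le> ahi" "0 < shi" "0 < gl"
    and boundary: "\<And>y v. (y, v) \<in> Gamma_minus \<Omega> \<Longrightarrow> gl \<le> g y v"
    and kernel: "AE v in sphere_measure. (AE v' in sphere_measure. 0 \<le> \<Theta> v v') \<and> (\<integral>v'. \<Theta> v v' \<partial>sphere_measure) = 1"
    and solution: "is_transport_solution \<Omega> \<Sigma>a \<sigma>s \<Theta> g u"
  shows "\<exists>c>0. AE (x, v) in lborel \<Otimes>\<^sub>M sphere_measure. x \<in> \<Omega> \<longrightarrow> c \<le> u x v"
proof -
  obtain B where B: "AE (x, v) in lborel \<Otimes>\<^sub>M sphere_measure. x \<in> \<Omega> \<longrightarrow> \<bar>u x v\<bar> \<le> B"
    using solution by (auto simp: is_transport_solution_def)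
  obtain h where "0 < h" and contracting: "shi / (alo + shi) * exp ((ahi + shi) * h) < 1"
    by (rule exists_contracting_step_length[of "shi / (alo + shi)" "ahi + shi"]) (use constants in auto)
  show ?thesis
  proof (rule positive_lower_bound_by_contraction[where B = B])
    show "AE (x, v) in lborel \<Otimes>\<^sub>M sphere_measure. x \<in> \<Omega> \<longrightarrow> - B \<le> u x v"
      using B by (auto elim!: eventually_mono)
    show "AE (x, v) in lborel \<Otimes>\<^sub>M sphere_measure. x \<in> \<Omega> \<longrightarrow>
        exp (- ((ahi + shi) * (2 * R))) * gl - shi / (alo + shi) * exp ((ahi + shi) * h) * M \<le> u x v"
      if "0 \<le> M" "AE (x, v) in lborel \<Otimes>\<^sub>M sphere_measure. x \<in> \<Omega> \<longrightarrow> - M \<le> u x v" for M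
      using transport_solution_lower_bound_step[OF \<Omega> measurable coefficients _ _ _ \<open>0 < h\<close> that(1) _
          boundary kernel solution that(2)] constants
      by (simp add: mult.commute)
  qed (use constants contracting in \<open>auto elim!: eventually_mono\<close>)
qed

theorem lemma2p1:
  fixes \<Omega> :: "'a::euclidean_space set"
    and \<sigma>s \<Sigma>a :: "'a \<Rightarrow> real"
    and \<Theta> g u :: "'a \<Rightarrow> 'a \<Rightarrow> real"
  assumes dim: "DIM('a) \<ge> 2"
    and dom: "open \<Omega>" "\<Omega> \<noteq> {}" "bounded \<Omega>" "convex \<Omega>" "smooth_domain \<Omega>"
    and sig: "\<exists>lo hi. in_F lborel \<Omega> lo hi \<sigma>s"
    and Th: "\<exists>lo hi. in_F (sphere_measure \<Otimes>\<^sub>M sphere_measure) (sphere 0 1 \<times> sphere 0 1) lo hi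
                        (\<lambda>(v, v'). \<Theta> v v')"
    and Th_sym: "AE (v, v') in sphere_measure \<Otimes>\<^sub>M sphere_measure. \<Theta> v v' = \<Theta> v' v"
    and Th_norm1: "AE v in sphere_measure. (\<integral>v'. \<Theta> v v' \<partial>sphere_measure) = 1"
    and Th_norm2: "AE v' in sphere_measure. (\<integral>v. \<Theta> v v' \<partial>sphere_measure) = 1"
    and g_meas: "(\<lambda>(y, v). g y v) \<in> borel_measurable borel"
    and g_bdd: "\<exists>B. \<forall>(y, v) \<in> Gamma_minus \<Omega>. \<bar>g y v\<bar> \<le> B"
    and g_pos: "(INF (y, v) \<in> Gamma_minus \<Omega>. g y v) > 0"
    and Sa: "\<exists>lo hi. in_F lborel \<Omega> lo hi \<Sigma>a"
    and sol: "is_transport_solution \<Omega> \<Sigma>a \<sigma>s \<Theta> g u"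
  shows "\<exists>c>0. AE (x, v) in lborel \<Otimes>\<^sub>M sphere_measure. x \<in> \<Omega> \<longrightarrow> u x v \<ge> c"
proof -
  obtain slo shi alo ahi tlo thi where \<sigma>s: "in_F lborel \<Omega> slo shi \<sigma>s" and \<Sigma>a: "in_F lborel \<Omega> alo ahi \<Sigma>a"
    and \<Theta>: "in_F (sphere_measure \<Otimes>\<^sub>M sphere_measure) (sphere 0 1 \<times> sphere 0 1) tlo thi (\<lambda>(v, v'). \<Theta> v v')"
    using sig Sa Th by blast
  have kernel: "AE v in sphere_measure. (AE v' in sphere_measure. 0 \<le> \<Theta> v v') \<and> (\<integral>v'. \<Theta> v v' \<partial>sphere_measure) = 1"
    using AE_kernel_nonneg[OF \<Theta>] Th_norm1 by eventually_elim simp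
  have coefficients: "AE y in lborel. y \<in> \<Omega> \<longrightarrow> alo \<le> \<Sigma>a y \<and> \<Sigma>a y \<le> ahi \<and> 0 \<le> \<sigma>s y \<and> \<sigma>s y \<le> shi"
    using \<sigma>s \<Sigma>a by (auto simp: in_F_def elim!: eventually_mono[OF AE_conj_iff[THEN iffD2, OF conjI]])
  obtain R where "\<forall>z\<in>\<Omega>. norm z \<le> R"
    using dom(3) by (auto simp: bounded_iff)
  obtain Bg where "\<forall>(y, v) \<in> Gamma_minus \<Omega>. \<bar>g y v\<bar> \<le> Bg"
    using g_bdd by blast
  then have "bdd_below ((\<lambda>(y, v). g y v) ` Gamma_minus \<Omega>)"
    unfolding bdd_below_def by (intro exI[of _ "- Bg"]) force
  then have boundary: "(INF (y, v) \<in> Gamma_minus \<Omega>. g y v) \<le> g y v" if "(y, v) \<in> Gamma_minus \<Omega>" for y v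
    using cINF_lower[OF _ that, of "\<lambda>(y, v). g y v"] by simp
  show ?thesis
    using transport_solution_lower_bound[OF dom(1,4,5) \<open>\<forall>z\<in>\<Omega>. norm z \<le> R\<close> _ _ coefficients _ _ _ g_pos
        boundary kernel sol] \<sigma>s \<Sigma>a
    by (auto simp: in_F_def)
qed

end
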